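(* Let $(X,\mathscr{A},\mu)$ be a $\sigma$-finite measure space and $\phi$ a nonsingular transformation of $X$. If the composition operator $C_\phi$ is symmetric, then $C_\phi$ is selfadjoint and unitary, and $C_\phi^2=I$. If $C_\phi$ is positive and symmetric, then $C_\phi=I$.
   Context: Nonsingular: $\phi^{-1}(\Delta)\in\mathscr{A}$ for $\Delta\in\mathscr{A}$ and $\mu(\phi^{-1}(\Delta))=0$ whenever $\mu(\Delta)=0$. $C_\phi$ is the operator in $L^2(\mu)$ with $\mathcal{D}(C_\phi)=\{f\in L^2(\mu):f\circ\phi\in L^2(\mu)\}$, $C_\phi f=f\circ\phi$. A densely defined operator $A$ is symmetric if $A\subseteq A^*$; positive means $\langle Af,f\rangle\ge0$ for $f\in\mathcal{D}(A)$. *)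

theory Defs
  imports "HOL-Analysis.Analysis" "HOL-Library.Complex_Order"
begin

text \<open>Elements of L^2(mu) are represented by complex-valued square integrable
measurable functions; everything is understood modulo mu-a.e. equality.
(Possibly unbounded) operators in L^2(mu) are represented by their graphs,
i.e. sets of pairs (f, A f).\<close>

definition L2 :: "'a measure \<Rightarrow> ('a \<Rightarrow> complex) set" where
  "L2 M = {f. f \<in> borel_measurable M \<and> integrable M (\<lambda>x. (cmod (f x))^2)}"

definition L2_inner :: "'a measure \<Rightarrow> ('a \<Rightarrow> complex) \<Rightarrow> ('a \<Rightarrow> complex) \<Rightarrow> complex" where
  "L2_inner M f g = (\<integral>x. f x * cnj (g x) \<partial>M)"

definition L2_norm :: "'a measure \<Rightarrow> ('a \<Rightarrow> complex) \<Rightarrow> real" where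
  "L2_norm M f = sqrt (\<integral>x. (cmod (f x))^2 \<partial>M)"

definition aeq :: "'a measure \<Rightarrow> ('a \<Rightarrow> complex) \<Rightarrow> ('a \<Rightarrow> complex) \<Rightarrow> bool" where
  "aeq M f g \<longleftrightarrow> (AE x in M. f x = g x)"

type_synonym 'a l2op = "(('a \<Rightarrow> complex) \<times> ('a \<Rightarrow> complex)) set"

definition nonsingular :: "'a measure \<Rightarrow> ('a \<Rightarrow> 'a) \<Rightarrow> bool" where
  "nonsingular M \<phi> \<longleftrightarrow> \<phi> \<in> measurable M M \<and>
     (\<forall>\<Delta>\<in>sets M. emeasure M \<Delta> = 0 \<longrightarrow> emeasure M (\<phi> -` \<Delta> \<inter> space M) = 0)"

definition comp_op :: "'a measure \<Rightarrow> ('a \<Rightarrow> 'a) \<Rightarrow> 'a l2op" where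
  "comp_op M \<phi> = {(f, f \<circ> \<phi>) | f. f \<in> L2 M \<and> f \<circ> \<phi> \<in> L2 M}"

definition identity_op :: "'a measure \<Rightarrow> 'a l2op" where
  "identity_op M = {(f, f) | f. f \<in> L2 M}"

definition op_dom :: "'a l2op \<Rightarrow> ('a \<Rightarrow> complex) set" where
  "op_dom A = fst ` A"

definition op_sub :: "'a measure \<Rightarrow> 'a l2op \<Rightarrow> 'a l2op \<Rightarrow> bool" where
  "op_sub M A B \<longleftrightarrow> (\<forall>(f, g)\<in>A. \<exists>(f', g')\<in>B. aeq M f f' \<and> aeq M g g')"

definition op_eq :: "'a measure \<Rightarrow> 'a l2op \<Rightarrow> 'a l2op \<Rightarrow> bool" where
  "op_eq M A B \<longleftrightarrow> op_sub M A B \<and> op_sub M B A"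

definition op_comp :: "'a measure \<Rightarrow> 'a l2op \<Rightarrow> 'a l2op \<Rightarrow> 'a l2op" where
  "op_comp M A B = {(f, h) | f g g' h. (f, g) \<in> B \<and> aeq M g g' \<and> (g', h) \<in> A}"

definition densely_defined :: "'a measure \<Rightarrow> 'a l2op \<Rightarrow> bool" where
  "densely_defined M A \<longleftrightarrow> op_dom A \<subseteq> L2 M \<and>
     (\<forall>g\<in>L2 M. \<forall>e>0. \<exists>f\<in>op_dom A. L2_norm M (\<lambda>x. f x - g x) < e)"

definition adjoint_op :: "'a measure \<Rightarrow> 'a l2op \<Rightarrow> 'a l2op" where
  "adjoint_op M A = {(g, h). g \<in> L2 M \<and> h \<in> L2 M \<and>
     (\<forall>(f, k)\<in>A. L2_inner M k g = L2_inner M f h)}"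

definition symmetric_op :: "'a measure \<Rightarrow> 'a l2op \<Rightarrow> bool" where
  "symmetric_op M A \<longleftrightarrow> densely_defined M A \<and> op_sub M A (adjoint_op M A)"

definition selfadjoint_op :: "'a measure \<Rightarrow> 'a l2op \<Rightarrow> bool" where
  "selfadjoint_op M A \<longleftrightarrow> densely_defined M A \<and> op_eq M A (adjoint_op M A)"

definition positive_op :: "'a measure \<Rightarrow> 'a l2op \<Rightarrow> bool" where
  "positive_op M A \<longleftrightarrow> (\<forall>(f, g)\<in>A. 0 \<le> L2_inner M g f)"

definition unitary_op :: "'a measure \<Rightarrow> 'a l2op \<Rightarrow> bool" where
  "unitary_op M A \<longleftrightarrow>
     (\<forall>f\<in>L2 M. \<exists>(f', g)\<in>A. aeq M f f') \<and>
     (\<forall>(f, g)\<in>A. L2_norm M g = L2_norm M f) \<and>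
     (\<forall>h\<in>L2 M. \<exists>(f, g)\<in>A. aeq M g h)"

end

theory Submission
  imports Defs
begin

text \<open>
  Symmetry of \<open>C\<^sub>\<phi>\<close> tested on indicators \<open>1\<^sub>A, 1\<^sub>B\<close> in its domain gives
  \<open>\<mu>(A \<inter> \<phi>\<^sup>-\<^sup>1 B) = \<mu>(B \<inter> \<phi>\<^sup>-\<^sup>1 A)\<close>. Dense domain and \<open>\<sigma>\<close>-finiteness provide an increasing
  sequence \<open>G\<^sub>n\<close> of such sets exhausting \<open>X\<close> up to a null set; taking \<open>A = G\<^sub>n\<close> and letting
  \<open>n \<rightarrow> \<infinity>\<close> shows that \<open>\<phi>\<close> preserves \<open>\<mu>\<close>. Hence \<open>C\<^sub>\<phi>\<close> is an everywhere defined isometry,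
  and \<open>\<langle>C\<^sub>\<phi>\<^sup>2 f, f\<rangle> = \<parallel>C\<^sub>\<phi> f\<parallel>\<^sup>2 = \<parallel>f\<parallel>\<^sup>2\<close> forces \<open>C\<^sub>\<phi>\<^sup>2 = I\<close>; everything else follows.
  If \<open>C\<^sub>\<phi>\<close> is moreover positive, \<open>g = f - C\<^sub>\<phi> f\<close> satisfies \<open>C\<^sub>\<phi> g = -g\<close>, so
  \<open>0 \<le> \<langle>C\<^sub>\<phi> g, g\<rangle> = -\<parallel>g\<parallel>\<^sup>2\<close> and \<open>g = 0\<close>.
\<close>

lemma borel_measurable_cnj [measurable]:
  "f \<in> borel_measurable M \<Longrightarrow> (\<lambda>x. cnj (f x)) \<in> borel_measurable M"
  by (rule borel_measurable_continuous_on[where f = cnj]) (auto intro: continuous_intros)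

lemma L2_borel_measurable: "f \<in> L2 M \<Longrightarrow> f \<in> borel_measurable M"
  and L2_integrable_sq: "f \<in> L2 M \<Longrightarrow> integrable M (\<lambda>x. (cmod (f x))\<^sup>2)"
  by (simp_all add: L2_def)

lemma integrable_L2_mult_cnj:
  assumes "f \<in> L2 M" "g \<in> L2 M"
  shows "integrable M (\<lambda>x. f x * cnj (g x))"
proof (rule Bochner_Integration.integrable_bound)
  show "integrable M (\<lambda>x. (cmod (f x))\<^sup>2 + (cmod (g x))\<^sup>2)"
    using assms by (intro Bochner_Integration.integrable_add L2_integrable_sq)
  show "(\<lambda>x. f x * cnj (g x)) \<in> borel_measurable M"
    using assms[THEN L2_borel_measurable] by measurable
  have "a * b \<le> a\<^sup>2 + b\<^sup>2" if "0 \<le> a" "0 \<le> b" for a b :: real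
    using sum_squares_bound[of a b] mult_nonneg_nonneg[OF that] by linarith
  then show "AE x in M. norm (f x * cnj (g x)) \<le> norm ((cmod (f x))\<^sup>2 + (cmod (g x))\<^sup>2)"
    by (simp add: norm_mult)
qed

lemma L2_diff:
  assumes "f \<in> L2 M" "g \<in> L2 M"
  shows "(\<lambda>x. f x - g x) \<in> L2 M"
proof -
  have "integrable M (\<lambda>x. (cmod (f x - g x))\<^sup>2)"
  proof (rule Bochner_Integration.integrable_bound)
    show "integrable M (\<lambda>x. 2 * (cmod (f x))\<^sup>2 + 2 * (cmod (g x))\<^sup>2)"
      using assms by (intro Bochner_Integration.integrable_add integrable_mult_right L2_integrable_sq)
    show "(\<lambda>x. (cmod (f x - g x))\<^sup>2) \<in> borel_measurable M"
      using assms[THEN L2_borel_measurable] by measurable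
    have "(cmod (a - b))\<^sup>2 \<le> 2 * (cmod a)\<^sup>2 + 2 * (cmod b)\<^sup>2" for a b :: complex
    proof -
      have "(cmod (a - b))\<^sup>2 \<le> (cmod a + cmod b)\<^sup>2"
        by (rule power_mono[OF norm_triangle_ineq4]) simp
      also have "\<dots> \<le> 2 * (cmod a)\<^sup>2 + 2 * (cmod b)\<^sup>2"
        using sum_squares_bound[of "cmod a" "cmod b"] by (simp add: power2_sum)
      finally show ?thesis .
    qed
    then show "AE x in M. norm ((cmod (f x - g x))\<^sup>2) \<le> norm (2 * (cmod (f x))\<^sup>2 + 2 * (cmod (g x))\<^sup>2)"
      by simp
  qed
  moreover have "(\<lambda>x. f x - g x) \<in> borel_measurable M"
    using assms[THEN L2_borel_measurable] by measurable
  ultimately show ?thesis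
    by (simp add: L2_def)
qed

lemma indicator_L2:
  assumes "A \<in> sets M" "emeasure M A < \<infinity>"
  shows "(indicator A :: _ \<Rightarrow> complex) \<in> L2 M"
proof -
  have "(\<lambda>x. (cmod (indicator A x :: complex))\<^sup>2) = indicator A"
    by (auto simp: indicator_def)
  with assms show ?thesis
    by (simp add: L2_def)
qed

lemma L2_inner_self: "L2_inner M f f = of_real (\<integral>x. (cmod (f x))\<^sup>2 \<partial>M)"
proof -
  have "L2_inner M f f = (\<integral>x. of_real ((cmod (f x))\<^sup>2) \<partial>M)"
    unfolding L2_inner_def
    by (rule Bochner_Integration.integral_cong) (simp_all add: complex_mult_cnj cmod_power2)
  then show ?thesis
    by (simp only: integral_complex_of_real)
qed

lemma L2_inner_cong_AE:
  assumes "aeq M f f'" "aeq M g g'"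
    and "f \<in> borel_measurable M" "f' \<in> borel_measurable M"
    and "g \<in> borel_measurable M" "g' \<in> borel_measurable M"
  shows "L2_inner M f g = L2_inner M f' g'"
  unfolding L2_inner_def
  by (rule integral_cong_AE) (use assms in \<open>auto simp: aeq_def elim!: AE_mp\<close>)

lemma L2_inner_diff_right:
  assumes "f \<in> L2 M" "g \<in> L2 M" "h \<in> L2 M"
  shows "L2_inner M f (\<lambda>x. g x - h x) = L2_inner M f g - L2_inner M f h"
proof -
  have "L2_inner M f (\<lambda>x. g x - h x) = (\<integral>x. f x * cnj (g x) - f x * cnj (h x) \<partial>M)"
    by (simp add: L2_inner_def right_diff_distrib)
  also have "\<dots> = L2_inner M f g - L2_inner M f h"
    unfolding L2_inner_def
    using assms by (intro Bochner_Integration.integral_diff integrable_L2_mult_cnj)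
  finally show ?thesis .
qed

lemma L2_inner_indicator:
  "L2_inner M (indicator A) (indicator B) = of_real (measure M (A \<inter> B \<inter> space M))"
proof -
  have "L2_inner M (indicator A) (indicator B) = (\<integral>x. of_real (indicator (A \<inter> B) x) \<partial>M)"
    unfolding L2_inner_def by (rule Bochner_Integration.integral_cong) (auto simp: indicator_def)
  then show ?thesis
    by (simp add: Int_assoc)
qed

lemma L2_sq_integral_diff:
  assumes f: "f \<in> L2 M" and g: "g \<in> L2 M"
  shows "(\<integral>x. (cmod (f x - g x))\<^sup>2 \<partial>M) =
    (\<integral>x. (cmod (f x))\<^sup>2 \<partial>M) + (\<integral>x. (cmod (g x))\<^sup>2 \<partial>M) - 2 * Re (L2_inner M f g)"
proof -
  have fg: "integrable M (\<lambda>x. f x * cnj (g x))"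
    using f g by (rule integrable_L2_mult_cnj)
  have "(\<integral>x. (cmod (f x - g x))\<^sup>2 \<partial>M) =
      (\<integral>x. (cmod (f x))\<^sup>2 + (cmod (g x))\<^sup>2 - 2 * Re (f x * cnj (g x)) \<partial>M)"
    by (rule Bochner_Integration.integral_cong) (simp_all add: cmod_power2 power2_diff algebra_simps)
  also have "\<dots> = (\<integral>x. (cmod (f x))\<^sup>2 + (cmod (g x))\<^sup>2 \<partial>M) - (\<integral>x. 2 * Re (f x * cnj (g x)) \<partial>M)"
    using f g fg by (intro Bochner_Integration.integral_diff Bochner_Integration.integrable_add
        integrable_mult_right integrable_Re L2_integrable_sq)
  also have "(\<integral>x. (cmod (f x))\<^sup>2 + (cmod (g x))\<^sup>2 \<partial>M) = (\<integral>x. (cmod (f x))\<^sup>2 \<partial>M) + (\<integral>x. (cmod (g x))\<^sup>2 \<partial>M)"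
    using f g by (intro Bochner_Integration.integral_add L2_integrable_sq)
  also have "(\<integral>x. 2 * Re (f x * cnj (g x)) \<partial>M) = 2 * Re (L2_inner M f g)"
    unfolding L2_inner_def by (simp only: integral_mult_right_zero integral_Re[OF fg])
  finally show ?thesis .
qed

lemma AE_eq_0_if_L2_sq_integral_eq_0:
  assumes "f \<in> L2 M" "(\<integral>x. (cmod (f x))\<^sup>2 \<partial>M) = 0"
  shows "AE x in M. f x = 0"
proof -
  have "AE x in M. (cmod (f x))\<^sup>2 = 0"
    using integral_nonneg_eq_0_iff_AE[of M "\<lambda>x. (cmod (f x))\<^sup>2"] assms
    by (simp add: L2_integrable_sq)
  then show ?thesis
    by simp
qed

lemma emeasure_L2_level_set_le:
  assumes "g \<in> L2 M" "c > 0"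
  shows "emeasure M {x\<in>space M. c \<le> cmod (g x)} \<le> ennreal ((\<integral>x. (cmod (g x))\<^sup>2 \<partial>M) / c\<^sup>2)"
proof -
  have "{x\<in>space M. c \<le> cmod (g x)} = {x\<in>space M. c\<^sup>2 \<le> (cmod (g x))\<^sup>2}"
    using \<open>c > 0\<close> by (auto simp: power_mono_iff)
  also have "emeasure M \<dots> \<le> ennreal (1 / c\<^sup>2 * (\<integral>x. (cmod (g x))\<^sup>2 \<partial>M))"
    using assms by (intro integral_Markov_inequality) (auto simp: L2_integrable_sq)
  finally show ?thesis
    by simp
qed

lemma null_sets_diff_UN_level_sets:
  assumes E: "E \<in> sets M" "emeasure M E < \<infinity>"
    and f: "\<And>m. f m \<in> L2 M" "\<And>m. L2_norm M (\<lambda>x. f m x - indicator E x) < 1 / Suc m"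
  shows "E - (\<Union>m. {x\<in>space M. 1/2 < cmod (f m x)}) \<in> null_sets M"
proof -
  define N where "N = E - (\<Union>m. {x\<in>space M. 1/2 < cmod (f m x)})"
  have [measurable]: "f m \<in> borel_measurable M" for m
    using f(1) by (rule L2_borel_measurable)
  have N: "N \<in> sets M"
    using E(1) unfolding N_def by measurable
  have bound: "emeasure M N \<le> ennreal (4 / Suc m)" for m
  proof -
    define d where "d x = f m x - indicator E x" for x
    have d: "d \<in> L2 M"
      unfolding d_def using f(1) E by (intro L2_diff indicator_L2)
    have "N \<subseteq> {x\<in>space M. 1/2 \<le> cmod (d x)}"
    proof
      fix x assume x: "x \<in> N"
      then have "\<not> 1/2 < cmod (f m x)" "x \<in> E" "x \<in> space M"
        using sets.sets_into_space[OF E(1)] unfolding N_def by blast+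
      moreover have "1 - cmod (f m x) \<le> cmod (f m x - 1)"
        using norm_triangle_ineq2[of 1 "f m x"] by (simp add: norm_minus_commute)
      ultimately show "x \<in> {x\<in>space M. 1/2 \<le> cmod (d x)}"
        by (simp add: d_def)
    qed
    then have "emeasure M N \<le> emeasure M {x\<in>space M. 1/2 \<le> cmod (d x)}"
      by (rule emeasure_mono) (use L2_borel_measurable[OF d] in measurable)
    also have "\<dots> \<le> ennreal (4 * (\<integral>x. (cmod (d x))\<^sup>2 \<partial>M))"
      using emeasure_L2_level_set_le[OF d, of "1/2"] by (simp add: power_divide mult.commute)
    also have "4 * (\<integral>x. (cmod (d x))\<^sup>2 \<partial>M) \<le> 4 / Suc m"
    proof -
      have "(\<integral>x. (cmod (d x))\<^sup>2 \<partial>M) = (L2_norm M d)\<^sup>2"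
        by (simp add: L2_norm_def)
      also have "\<dots> \<le> (1 / Suc m)\<^sup>2"
        using f(2)[of m] by (intro power_mono) (auto simp: d_def L2_norm_def)
      also have "\<dots> \<le> 1 / Suc m"
        by (simp add: power2_eq_square divide_le_eq)
      finally show ?thesis
        by simp
    qed
    then have "ennreal (4 * (\<integral>x. (cmod (d x))\<^sup>2 \<partial>M)) \<le> ennreal (4 / Suc m)"
      by (rule ennreal_leI)
    finally show ?thesis .
  qed
  have "emeasure M N \<le> 0"
  proof (rule ennreal_le_epsilon)
    fix e :: real assume "0 < e"
    then obtain m where m: "inverse (real (Suc m)) < e / 4"
      using reals_Archimedean[of "e / 4"] by auto
    have "4 / real (Suc m) = 4 * inverse (real (Suc m))"
      by (rule divide_inverse)
    with m have "ennreal (4 / Suc m) \<le> ennreal e"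
      by (intro ennreal_leI) linarith
    with bound[of m] show "emeasure M N \<le> 0 + ennreal e"
      by simp
  qed
  with N have "N \<in> null_sets M"
    by (intro null_setsI) simp_all
  then show ?thesis
    by (simp only: N_def)
qed

lemma emeasure_eq_SUP_inter_incseq:
  assumes "incseq G" "\<And>n. G n \<in> sets M" "X \<in> sets M" "X - (\<Union>n. G n) \<in> null_sets M"
  shows "emeasure M X = (SUP n. emeasure M (X \<inter> G n))"
proof -
  have "(SUP n. emeasure M (X \<inter> G n)) = emeasure M (\<Union>n. X \<inter> G n)"
    using assms by (intro SUP_emeasure_incseq) (auto simp: incseq_def)
  also have "(\<Union>n. X \<inter> G n) = X - (X - (\<Union>n. G n))"
    by blast
  also have "emeasure M \<dots> = emeasure M X"
    using assms by (intro emeasure_Diff_null_set)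
  finally show ?thesis ..
qed

lemma null_sets_vimage_nonsingular:
  assumes "nonsingular M \<phi>" "N \<in> null_sets M"
  shows "\<phi> -` N \<inter> space M \<in> null_sets M"
proof (rule null_setsI)
  show "\<phi> -` N \<inter> space M \<in> sets M"
    using assms by (auto simp: nonsingular_def intro: measurable_sets)
  show "emeasure M (\<phi> -` N \<inter> space M) = 0"
    using assms by (auto simp: nonsingular_def null_sets_def)
qed

lemma AE_comp_nonsingular:
  assumes "nonsingular M \<phi>" "AE x in M. Q x"
  shows "AE x in M. Q (\<phi> x)"
proof -
  obtain N where N: "{x\<in>space M. \<not> Q x} \<subseteq> N" "emeasure M N = 0" "N \<in> sets M"
    using assms(2) by (rule AE_E)
  have "\<phi> \<in> measurable M M"
    using assms(1) by (simp add: nonsingular_def)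
  then have "{x\<in>space M. \<not> Q (\<phi> x)} \<subseteq> \<phi> -` N \<inter> space M"
    using N(1) measurable_space[of \<phi> M M] by auto
  moreover have "\<phi> -` N \<inter> space M \<in> null_sets M"
    using N(2,3) by (intro null_sets_vimage_nonsingular[OF assms(1)] null_setsI)
  ultimately show ?thesis
    by (rule AE_I'[rotated])
qed

lemma
  assumes "\<phi> \<in> measurable M M" "distr M M \<phi> = M" "f \<in> L2 M"
  shows L2_comp_distr_eq: "f \<circ> \<phi> \<in> L2 M"
    and L2_sq_integral_comp_distr_eq: "(\<integral>x. (cmod (f (\<phi> x)))\<^sup>2 \<partial>M) = (\<integral>x. (cmod (f x))\<^sup>2 \<partial>M)"
proof -
  have [measurable]: "f \<in> borel_measurable M" "\<phi> \<in> measurable M M"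
    using assms by (simp_all add: L2_borel_measurable)
  have "integrable M (\<lambda>x. (cmod (f (\<phi> x)))\<^sup>2)"
    using integrable_distr_eq[of \<phi> M M "\<lambda>x. (cmod (f x))\<^sup>2"] assms
    by (simp add: L2_integrable_sq)
  then show "f \<circ> \<phi> \<in> L2 M"
    by (simp add: L2_def comp_def)
  show "(\<integral>x. (cmod (f (\<phi> x)))\<^sup>2 \<partial>M) = (\<integral>x. (cmod (f x))\<^sup>2 \<partial>M)"
    using integral_distr[of \<phi> M M "\<lambda>x. (cmod (f x))\<^sup>2"] assms by simp
qed

lemma op_subI:
  "(\<And>f g. (f, g) \<in> A \<Longrightarrow> \<exists>f' g'. (f', g') \<in> B \<and> aeq M f f' \<and> aeq M g g') \<Longrightarrow> op_sub M A B"
  unfolding op_sub_def by fastforce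

lemma aeq_refl [iff]: "aeq M f f"
  by (simp add: aeq_def)

locale symmetric_composition_operator =
  fixes M :: "'a measure" and \<phi> :: "'a \<Rightarrow> 'a"
  assumes sigma_finite: "sigma_finite_measure M"
    and nonsingular: "nonsingular M \<phi>"
    and symmetric: "symmetric_op M (comp_op M \<phi>)"
begin

lemma measurable_phi [measurable]: "\<phi> \<in> measurable M M"
  using nonsingular by (simp add: nonsingular_def)

definition pre :: "'a set \<Rightarrow> 'a set" where
  "pre A = \<phi> -` A \<inter> space M"

lemma sets_pre [measurable]: "A \<in> sets M \<Longrightarrow> pre A \<in> sets M"
  unfolding pre_def by (rule measurable_sets[OF measurable_phi])

lemma L2_inner_comp_sym:
  assumes "f \<in> L2 M" "f \<circ> \<phi> \<in> L2 M" "k \<in> L2 M" "k \<circ> \<phi> \<in> L2 M"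
  shows "L2_inner M (k \<circ> \<phi>) f = L2_inner M k (f \<circ> \<phi>)"
proof -
  have "(f, f \<circ> \<phi>) \<in> comp_op M \<phi>" "(k, k \<circ> \<phi>) \<in> comp_op M \<phi>"
    using assms by (auto simp: comp_op_def)
  with symmetric obtain f' h where fh: "(f', h) \<in> adjoint_op M (comp_op M \<phi>)" "aeq M f f'" "aeq M (f \<circ> \<phi>) h"
    unfolding symmetric_op_def op_sub_def by fastforce
  with \<open>(k, k \<circ> \<phi>) \<in> comp_op M \<phi>\<close> have L: "f' \<in> L2 M" "h \<in> L2 M"
    and adj: "L2_inner M (k \<circ> \<phi>) f' = L2_inner M k h"
    unfolding adjoint_op_def by auto
  have "L2_inner M (k \<circ> \<phi>) f = L2_inner M (k \<circ> \<phi>) f'"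
    using assms L fh(2) by (intro L2_inner_cong_AE) (auto simp: L2_borel_measurable)
  also have "\<dots> = L2_inner M k h"
    by (rule adj)
  also have "\<dots> = L2_inner M k (f \<circ> \<phi>)"
    using assms L fh(3) by (intro L2_inner_cong_AE) (auto simp: L2_borel_measurable aeq_def elim: AE_mp)
  finally show ?thesis .
qed

text \<open>The sets whose indicator lies in the domain of \<open>C\<^sub>\<phi>\<close>.\<close>
definition dom_set :: "'a set \<Rightarrow> bool" where
  "dom_set A \<longleftrightarrow> A \<in> sets M \<and> emeasure M A < \<infinity> \<and> emeasure M (pre A) < \<infinity>"

lemma indicator_comp_eq: "x \<in> space M \<Longrightarrow> indicator A (\<phi> x) = indicator (pre A) x"
  by (simp add: pre_def indicator_def)

lemma
  assumes "dom_set A"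
  shows L2_indicator_dom_set: "(indicator A :: _ \<Rightarrow> complex) \<in> L2 M"
    and L2_indicator_comp_dom_set: "(indicator A :: _ \<Rightarrow> complex) \<circ> \<phi> \<in> L2 M"
proof -
  show "(indicator A :: _ \<Rightarrow> complex) \<in> L2 M"
    using assms by (intro indicator_L2) (simp_all add: dom_set_def)
  have "(indicator (pre A) :: _ \<Rightarrow> complex) \<in> L2 M"
    using assms by (intro indicator_L2) (simp_all add: dom_set_def sets_pre)
  moreover have "(indicator A :: _ \<Rightarrow> complex) \<circ> \<phi> \<in> borel_measurable M"
    using assms unfolding dom_set_def comp_def by (intro measurable_compose[OF measurable_phi]) auto
  moreover have "integrable M (\<lambda>x. (cmod (((indicator A :: _ \<Rightarrow> complex) \<circ> \<phi>) x))\<^sup>2) \<longleftrightarrow>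
      integrable M (\<lambda>x. (cmod (indicator (pre A) x :: complex))\<^sup>2)"
    by (intro Bochner_Integration.integrable_cong) (simp_all add: indicator_comp_eq)
  ultimately show "(indicator A :: _ \<Rightarrow> complex) \<circ> \<phi> \<in> L2 M"
    by (simp add: L2_def)
qed

lemma
  shows L2_inner_indicator_comp_left:
      "L2_inner M ((indicator B :: _ \<Rightarrow> complex) \<circ> \<phi>) (indicator A) = of_real (measure M (A \<inter> pre B))"
    and L2_inner_indicator_comp_right:
      "L2_inner M (indicator A) ((indicator B :: _ \<Rightarrow> complex) \<circ> \<phi>) = of_real (measure M (A \<inter> pre B))"
proof -
  have "L2_inner M ((indicator B :: _ \<Rightarrow> complex) \<circ> \<phi>) (indicator A) = L2_inner M (indicator (pre B)) (indicator A)"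
    "L2_inner M (indicator A) ((indicator B :: _ \<Rightarrow> complex) \<circ> \<phi>) = L2_inner M (indicator A) (indicator (pre B))"
    unfolding L2_inner_def by (rule Bochner_Integration.integral_cong; simp add: indicator_comp_eq)+
  then show "L2_inner M ((indicator B :: _ \<Rightarrow> complex) \<circ> \<phi>) (indicator A) = of_real (measure M (A \<inter> pre B))"
    "L2_inner M (indicator A) ((indicator B :: _ \<Rightarrow> complex) \<circ> \<phi>) = of_real (measure M (A \<inter> pre B))"
    by (simp_all add: L2_inner_indicator pre_def Int_ac)
qed

lemma emeasure_inter_pre_commute:
  assumes A: "dom_set A" and B: "dom_set B"
  shows "emeasure M (A \<inter> pre B) = emeasure M (B \<inter> pre A)"
proof -
  have "L2_inner M ((indicator B :: _ \<Rightarrow> complex) \<circ> \<phi>) (indicator A) =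
      L2_inner M (indicator B) ((indicator A :: _ \<Rightarrow> complex) \<circ> \<phi>)"
    using A B by (intro L2_inner_comp_sym L2_indicator_dom_set L2_indicator_comp_dom_set)
  then have "measure M (A \<inter> pre B) = measure M (B \<inter> pre A)"
    by (simp add: L2_inner_indicator_comp_left L2_inner_indicator_comp_right)
  moreover have "emeasure M (A \<inter> pre B) < \<infinity>" "emeasure M (B \<inter> pre A) < \<infinity>"
    using A B by (auto simp: dom_set_def intro: le_less_trans[OF emeasure_mono])
  ultimately show ?thesis
    by (simp add: emeasure_eq_ennreal_measure less_top)
qed

lemma dom_set_level_set:
  assumes f: "f \<in> L2 M" "f \<circ> \<phi> \<in> L2 M" and c: "c > 0"
  shows "dom_set {x\<in>space M. c < cmod (f x)}"
proof -
  let ?S = "\<lambda>g. {x\<in>space M. c \<le> cmod (g x)}"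
  have [measurable]: "f \<in> borel_measurable M"
    using f(1) by (rule L2_borel_measurable)
  have "emeasure M {x\<in>space M. c < cmod (f x)} \<le> emeasure M (?S f)"
    by (rule emeasure_mono) auto
  also have "\<dots> < \<infinity>"
    using emeasure_L2_level_set_le[OF f(1) c] by (simp add: le_less_trans)
  finally have "emeasure M {x\<in>space M. c < cmod (f x)} < \<infinity>" .
  moreover have "emeasure M (pre {x\<in>space M. c < cmod (f x)}) \<le> emeasure M (?S (f \<circ> \<phi>))"
    using measurable_space[OF measurable_phi] by (intro emeasure_mono) (auto simp: pre_def)
  moreover have "emeasure M (?S (f \<circ> \<phi>)) < \<infinity>"
    using emeasure_L2_level_set_le[OF f(2) c] by (simp add: le_less_trans)
  ultimately show ?thesis
    by (auto simp: dom_set_def)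
qed

lemma dom_set_empty: "dom_set {}"
  by (simp add: dom_set_def pre_def)

lemma dom_set_Un: "dom_set A \<Longrightarrow> dom_set B \<Longrightarrow> dom_set (A \<union> B)"
  unfolding dom_set_def
  using emeasure_subadditive[of A M B] emeasure_subadditive[of "pre A" M "pre B"]
  by (auto simp: pre_def vimage_Un Int_Un_distrib2 intro: le_less_trans)

lemma dom_set_finite_UN: "finite I \<Longrightarrow> (\<And>i. i \<in> I \<Longrightarrow> dom_set (A i)) \<Longrightarrow> dom_set (\<Union>i\<in>I. A i)"
  by (induction I rule: finite_induct) (auto intro: dom_set_Un dom_set_empty)

lemma dom_set_subset:
  assumes "dom_set A" "B \<in> sets M" "B \<subseteq> A"
  shows "dom_set B"
proof -
  have "pre B \<subseteq> pre A"
    using assms(3) by (auto simp: pre_def)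
  then have "emeasure M B \<le> emeasure M A" "emeasure M (pre B) \<le> emeasure M (pre A)"
    using assms by (auto simp: dom_set_def intro!: emeasure_mono)
  with assms show ?thesis
    by (auto simp: dom_set_def intro: le_less_trans)
qed

lemma dom_set_exhaustion:
  obtains G where "\<And>n. dom_set (G n)" "incseq G" "space M - (\<Union>n. G n) \<in> null_sets M"
proof -
  interpret sigma_finite_measure M
    by (rule sigma_finite)
  obtain E :: "nat \<Rightarrow> 'a set"
    where E: "range E \<subseteq> sets M" "(\<Union>k. E k) = space M" "\<And>k. emeasure M (E k) \<noteq> \<infinity>"
    using sigma_finite_incseq by metis
  have "\<exists>f\<in>op_dom (comp_op M \<phi>). L2_norm M (\<lambda>x. f x - indicator (E k) x) < 1 / Suc m" for k m
  proof -
    have "(indicator (E k) :: _ \<Rightarrow> complex) \<in> L2 M"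
      using E by (intro indicator_L2) (auto simp: less_top)
    then show ?thesis
      using symmetric by (simp add: symmetric_op_def densely_defined_def)
  qed
  then obtain F where F: "\<And>k m. F k m \<in> op_dom (comp_op M \<phi>)"
    "\<And>k m. L2_norm M (\<lambda>x. F k m x - indicator (E k) x) < 1 / Suc m"
    by metis
  have F_L2: "F k m \<in> L2 M" "F k m \<circ> \<phi> \<in> L2 M" for k m
    using F(1)[of k m] by (auto simp: op_dom_def comp_op_def)
  define S where "S k m = {x\<in>space M. 1/2 < cmod (F k m x)}" for k m
  have S: "dom_set (S k m)" for k m
    unfolding S_def using F_L2 by (intro dom_set_level_set) auto
  have null: "E k - (\<Union>m. S k m) \<in> null_sets M" for k
    unfolding S_def using E F_L2 F(2) by (intro null_sets_diff_UN_level_sets) (auto simp: less_top)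
  define G where "G n = (\<Union>k\<le>n. \<Union>m\<le>n. S k m)" for n
  have G: "dom_set (G n)" for n
    unfolding G_def by (intro dom_set_finite_UN S) auto
  have S_G: "S k m \<subseteq> G (max k m)" for k m
    using max.cobounded1[of k m] max.cobounded2[of m k] unfolding G_def by blast
  show thesis
  proof
    show "dom_set (G n)" for n
      by (rule G)
    show "incseq G"
      unfolding incseq_def G_def by (intro allI impI UN_mono) auto
    have "space M - (\<Union>n. G n) \<subseteq> (\<Union>k. E k - (\<Union>m. S k m))"
    proof
      fix x assume x: "x \<in> space M - (\<Union>n. G n)"
      then obtain k where "x \<in> E k"
        using E(2) by auto
      moreover have "x \<notin> S k m" for m
        using x S_G[of k m] by auto
      ultimately show "x \<in> (\<Union>k. E k - (\<Union>m. S k m))"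
        by auto
    qed
    moreover have "space M - (\<Union>n. G n) \<in> sets M"
      using G by (auto simp: dom_set_def)
    ultimately show "space M - (\<Union>n. G n) \<in> null_sets M"
      by (intro null_sets_subset[OF null_sets_UN[OF null]])
  qed
qed

lemma emeasure_pre:
  assumes A: "A \<in> sets M"
  shows "emeasure M (pre A) = emeasure M A"
proof -
  obtain G where G: "\<And>n. dom_set (G n)" "incseq G" and Z: "space M - (\<Union>n. G n) \<in> null_sets M"
    using dom_set_exhaustion by blast
  have G_sets: "G n \<in> sets M" for n
    using G(1) by (simp add: dom_set_def)
  have pre_G: "incseq (\<lambda>n. pre (G n))"
    using G(2) by (auto simp: incseq_def pre_def)
  have null_G: "X - (\<Union>n. G n) \<in> null_sets M" if "X \<in> sets M" for X
    using sets.sets_into_space[OF that] that G_sets by (intro null_sets_subset[OF Z]) auto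
  have null_pre_G: "X - (\<Union>n. pre (G n)) \<in> null_sets M" if "X \<in> sets M" for X
  proof (rule null_sets_subset)
    show "\<phi> -` (space M - (\<Union>n. G n)) \<inter> space M \<in> null_sets M"
      using nonsingular Z by (rule null_sets_vimage_nonsingular)
    show "X - (\<Union>n. pre (G n)) \<subseteq> \<phi> -` (space M - (\<Union>n. G n)) \<inter> space M"
      using sets.sets_into_space[OF that] measurable_space[OF measurable_phi] by (auto simp: pre_def)
  qed (use that G_sets in auto)
  have pre_dom_set: "emeasure M (pre B) = emeasure M B" if B: "dom_set B" for B
  proof -
    have B_sets: "B \<in> sets M"
      using B by (simp add: dom_set_def)
    have "emeasure M (pre B) = (SUP n. emeasure M (pre B \<inter> G n))"
      using G(2) G_sets B_sets by (intro emeasure_eq_SUP_inter_incseq null_G) auto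
    also have "\<dots> = (SUP n. emeasure M (B \<inter> pre (G n)))"
      using emeasure_inter_pre_commute[OF G(1) B] by (simp add: Int_commute)
    also have "\<dots> = emeasure M B"
      using pre_G G_sets B_sets by (intro emeasure_eq_SUP_inter_incseq[symmetric] null_pre_G) auto
    finally show ?thesis .
  qed
  have "emeasure M A = (SUP n. emeasure M (A \<inter> G n))"
    using G(2) G_sets A by (intro emeasure_eq_SUP_inter_incseq null_G) auto
  also have "\<dots> = (SUP n. emeasure M (pre (A \<inter> G n)))"
  proof -
    have "dom_set (A \<inter> G n)" for n
      using A G_sets by (intro dom_set_subset[OF G(1)]) auto
    then show ?thesis
      by (simp add: pre_dom_set)
  qed
  also have "\<dots> = (SUP n. emeasure M (pre A \<inter> pre (G n)))"
    by (simp add: pre_def Int_ac)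
  also have "\<dots> = emeasure M (pre A)"
    using pre_G G_sets A by (intro emeasure_eq_SUP_inter_incseq[symmetric] null_pre_G) auto
  finally show ?thesis ..
qed

lemma distr_phi: "distr M M \<phi> = M"
  by (rule measure_eqI) (simp_all add: emeasure_distr emeasure_pre[unfolded pre_def])

lemma L2_comp: "f \<in> L2 M \<Longrightarrow> f \<circ> \<phi> \<in> L2 M"
  using measurable_phi distr_phi by (rule L2_comp_distr_eq)

lemma L2_sq_integral_comp: "f \<in> L2 M \<Longrightarrow> (\<integral>x. (cmod (f (\<phi> x)))\<^sup>2 \<partial>M) = (\<integral>x. (cmod (f x))\<^sup>2 \<partial>M)"
  using measurable_phi distr_phi by (rule L2_sq_integral_comp_distr_eq)

lemma L2_inner_comp: "f \<in> L2 M \<Longrightarrow> k \<in> L2 M \<Longrightarrow> L2_inner M (k \<circ> \<phi>) f = L2_inner M k (f \<circ> \<phi>)"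
  by (intro L2_inner_comp_sym L2_comp)

lemma AE_comp_comp_eq:
  assumes f: "f \<in> L2 M"
  shows "AE x in M. f (\<phi> (\<phi> x)) = f x"
proof -
  let ?I = "\<lambda>g. \<integral>x. (cmod (g x))\<^sup>2 \<partial>M"
  have f1: "f \<circ> \<phi> \<in> L2 M" and f2: "f \<circ> \<phi> \<circ> \<phi> \<in> L2 M"
    using f by (simp_all add: L2_comp)
  have "?I (\<lambda>x. (f \<circ> \<phi> \<circ> \<phi>) x - f x) = ?I (f \<circ> \<phi> \<circ> \<phi>) + ?I f - 2 * Re (L2_inner M (f \<circ> \<phi> \<circ> \<phi>) f)"
    using f2 f by (rule L2_sq_integral_diff)
  also have "?I (f \<circ> \<phi> \<circ> \<phi>) = ?I f"
    using L2_sq_integral_comp[OF f1] L2_sq_integral_comp[OF f] by (simp add: comp_def)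
  also have "L2_inner M (f \<circ> \<phi> \<circ> \<phi>) f = L2_inner M (f \<circ> \<phi>) (f \<circ> \<phi>)"
    using f f1 by (rule L2_inner_comp)
  also have "\<dots> = of_real (?I f)"
    using L2_sq_integral_comp[OF f] by (simp add: L2_inner_self comp_def)
  finally have "?I (\<lambda>x. (f \<circ> \<phi> \<circ> \<phi>) x - f x) = 0"
    by simp
  then have "AE x in M. (f \<circ> \<phi> \<circ> \<phi>) x - f x = 0"
    using f2 f by (intro AE_eq_0_if_L2_sq_integral_eq_0 L2_diff)
  then show ?thesis
    by simp
qed

lemma adjoint_AE_eq_comp:
  assumes "(g, h) \<in> adjoint_op M (comp_op M \<phi>)"
  shows "AE x in M. h x = g (\<phi> x)"
proof -
  have g: "g \<in> L2 M" and h: "h \<in> L2 M"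
    and adj: "\<And>f. f \<in> L2 M \<Longrightarrow> L2_inner M (f \<circ> \<phi>) g = L2_inner M f h"
    using assms L2_comp by (auto simp: adjoint_op_def comp_op_def)
  define d where "d x = h x - (g \<circ> \<phi>) x" for x
  have d: "d \<in> L2 M"
    unfolding d_def using h g by (intro L2_diff L2_comp)
  have "L2_inner M d d = L2_inner M d h - L2_inner M d (g \<circ> \<phi>)"
    unfolding d_def[abs_def] using d h g by (intro L2_inner_diff_right L2_comp) (simp_all add: d_def[abs_def])
  also have "\<dots> = 0"
    using adj[OF d] L2_inner_comp[OF g d] by simp
  finally have "(\<integral>x. (cmod (d x))\<^sup>2 \<partial>M) = 0"
    by (simp add: L2_inner_self)
  then have "AE x in M. d x = 0"
    by (rule AE_eq_0_if_L2_sq_integral_eq_0[OF d])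
  then show ?thesis
    by (simp add: d_def)
qed

lemma selfadjoint_comp_op: "selfadjoint_op M (comp_op M \<phi>)"
proof -
  have "op_sub M (adjoint_op M (comp_op M \<phi>)) (comp_op M \<phi>)"
  proof (rule op_subI)
    fix g h assume gh: "(g, h) \<in> adjoint_op M (comp_op M \<phi>)"
    then have "(g, g \<circ> \<phi>) \<in> comp_op M \<phi>"
      using L2_comp by (auto simp: adjoint_op_def comp_op_def)
    moreover have "aeq M h (g \<circ> \<phi>)"
      using adjoint_AE_eq_comp[OF gh] by (simp add: aeq_def)
    ultimately show "\<exists>f' g'. (f', g') \<in> comp_op M \<phi> \<and> aeq M g f' \<and> aeq M h g'"
      by blast
  qed
  with symmetric show ?thesis
    by (simp add: symmetric_op_def selfadjoint_op_def op_eq_def)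
qed

lemma unitary_comp_op: "unitary_op M (comp_op M \<phi>)"
  unfolding unitary_op_def
proof (intro conjI ballI)
  fix f assume f: "f \<in> L2 M"
  then show "\<exists>(f', g)\<in>comp_op M \<phi>. aeq M f f'"
    using L2_comp by (auto simp: comp_op_def)
  show "\<exists>(g, h)\<in>comp_op M \<phi>. aeq M h f"
  proof (rule bexI)
    show "(f \<circ> \<phi>, f \<circ> \<phi> \<circ> \<phi>) \<in> comp_op M \<phi>"
      using f L2_comp by (auto simp: comp_op_def)
    show "case (f \<circ> \<phi>, f \<circ> \<phi> \<circ> \<phi>) of (g, h) \<Rightarrow> aeq M h f"
      using AE_comp_comp_eq[OF f] by (simp add: aeq_def)
  qed
next
  fix p assume "p \<in> comp_op M \<phi>"
  then show "case p of (f, g) \<Rightarrow> L2_norm M g = L2_norm M f"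
    using L2_sq_integral_comp by (auto simp: comp_op_def L2_norm_def)
qed

lemma comp_op_square_eq_identity: "op_eq M (op_comp M (comp_op M \<phi>) (comp_op M \<phi>)) (identity_op M)"
  unfolding op_eq_def
proof (intro conjI op_subI)
  fix f h assume "(f, h) \<in> op_comp M (comp_op M \<phi>) (comp_op M \<phi>)"
  then obtain g' where f: "f \<in> L2 M" and fg': "aeq M (f \<circ> \<phi>) g'" and h: "h = g' \<circ> \<phi>"
    by (auto simp: op_comp_def comp_op_def)
  have "AE x in M. f (\<phi> (\<phi> x)) = g' (\<phi> x)"
    using fg' by (intro AE_comp_nonsingular[OF nonsingular]) (simp add: aeq_def)
  then have "aeq M h f"
    using AE_comp_comp_eq[OF f] unfolding aeq_def h by eventually_elim simp
  moreover have "(f, f) \<in> identity_op M"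
    using f by (simp add: identity_op_def)
  ultimately show "\<exists>f' g'. (f', g') \<in> identity_op M \<and> aeq M f f' \<and> aeq M h g'"
    by blast
next
  fix f f' assume "(f, f') \<in> identity_op M"
  then have f: "f \<in> L2 M" and f': "f' = f"
    by (auto simp: identity_op_def)
  have "(f, f \<circ> \<phi> \<circ> \<phi>) \<in> op_comp M (comp_op M \<phi>) (comp_op M \<phi>)"
    using f L2_comp unfolding op_comp_def comp_op_def by (auto simp: aeq_def)
  moreover have "aeq M f' (f \<circ> \<phi> \<circ> \<phi>)"
    using AE_comp_comp_eq[OF f] f' by (auto simp: aeq_def elim: AE_mp)
  ultimately show "\<exists>g g'. (g, g') \<in> op_comp M (comp_op M \<phi>) (comp_op M \<phi>) \<and> aeq M f g \<and> aeq M f' g'"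
    by blast
qed

lemma AE_comp_eq_if_positive:
  assumes pos: "positive_op M (comp_op M \<phi>)" and f: "f \<in> L2 M"
  shows "AE x in M. f (\<phi> x) = f x"
proof -
  define g where "g x = f x - (f \<circ> \<phi>) x" for x
  have g: "g \<in> L2 M"
    unfolding g_def[abs_def] by (rule L2_diff[OF f L2_comp[OF f]])
  have g1: "g \<circ> \<phi> \<in> L2 M"
    by (rule L2_comp[OF g])
  have "0 \<le> L2_inner M (g \<circ> \<phi>) g"
    using pos g g1 by (auto simp: positive_op_def comp_op_def)
  also have "L2_inner M (g \<circ> \<phi>) g = L2_inner M (\<lambda>x. - g x) g"
  proof (rule L2_inner_cong_AE)
    show "aeq M (g \<circ> \<phi>) (\<lambda>x. - g x)"
      using AE_comp_comp_eq[OF f] unfolding aeq_def g_def by eventually_elim simp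
  qed (use g g1 in \<open>auto simp: L2_borel_measurable\<close>)
  also have "\<dots> = - of_real (\<integral>x. (cmod (g x))\<^sup>2 \<partial>M)"
    using L2_inner_self[of M g] by (simp add: L2_inner_def)
  finally have "(\<integral>x. (cmod (g x))\<^sup>2 \<partial>M) \<le> 0"
    by (simp add: less_eq_complex_def)
  moreover have "0 \<le> (\<integral>x. (cmod (g x))\<^sup>2 \<partial>M)"
    by simp
  ultimately have "(\<integral>x. (cmod (g x))\<^sup>2 \<partial>M) = 0"
    by linarith
  then have "AE x in M. g x = 0"
    by (rule AE_eq_0_if_L2_sq_integral_eq_0[OF g])
  then show ?thesis
    by eventually_elim (simp add: g_def)
qed

lemma comp_op_eq_identity_if_positive:
  assumes pos: "positive_op M (comp_op M \<phi>)"
  shows "op_eq M (comp_op M \<phi>) (identity_op M)"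
  unfolding op_eq_def
proof (intro conjI op_subI)
  fix f g assume "(f, g) \<in> comp_op M \<phi>"
  then have "(f, f) \<in> identity_op M" "aeq M g f"
    using AE_comp_eq_if_positive[OF pos] by (auto simp: identity_op_def comp_op_def aeq_def)
  then show "\<exists>f' g'. (f', g') \<in> identity_op M \<and> aeq M f f' \<and> aeq M g g'"
    by blast
next
  fix f f' assume "(f, f') \<in> identity_op M"
  then have f: "f \<in> L2 M" and f': "f' = f"
    by (auto simp: identity_op_def)
  have "(f, f \<circ> \<phi>) \<in> comp_op M \<phi>"
    using f L2_comp by (simp add: comp_op_def)
  moreover have "aeq M f' (f \<circ> \<phi>)"
    using AE_comp_eq_if_positive[OF pos f] unfolding aeq_def f' by eventually_elim simp
  ultimately show "\<exists>g g'. (g, g') \<in> comp_op M \<phi> \<and> aeq M f g \<and> aeq M f' g'"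
    by blast
qed

end

theorem propositionB1:
  fixes M :: "'a measure" and \<phi> :: "'a \<Rightarrow> 'a"
  assumes "sigma_finite_measure M"
    and "nonsingular M \<phi>"
  shows "(symmetric_op M (comp_op M \<phi>) \<longrightarrow>
           selfadjoint_op M (comp_op M \<phi>) \<and> unitary_op M (comp_op M \<phi>) \<and>
           op_eq M (op_comp M (comp_op M \<phi>) (comp_op M \<phi>)) (identity_op M)) \<and>
         (positive_op M (comp_op M \<phi>) \<and> symmetric_op M (comp_op M \<phi>) \<longrightarrow>
           op_eq M (comp_op M \<phi>) (identity_op M))"
proof (rule conjI; rule impI)
  assume "symmetric_op M (comp_op M \<phi>)"
  then interpret symmetric_composition_operator M \<phi>
    using assms by (intro symmetric_composition_operator.intro)
  show "selfadjoint_op M (comp_op M \<phi>) \<and> unitary_op M (comp_op M \<phi>) \<and>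
      op_eq M (op_comp M (comp_op M \<phi>) (comp_op M \<phi>)) (identity_op M)"
    using selfadjoint_comp_op unitary_comp_op comp_op_square_eq_identity by blast
next
  assume pos_sym: "positive_op M (comp_op M \<phi>) \<and> symmetric_op M (comp_op M \<phi>)"
  then interpret symmetric_composition_operator M \<phi>
    using assms by (intro symmetric_composition_operator.intro) simp_all
  show "op_eq M (comp_op M \<phi>) (identity_op M)"
    using pos_sym comp_op_eq_identity_if_positive by blast
qed

end
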